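(* Let $A$ (in $\mathcal H$) and $B$ (in $\mathcal K$) be closed densely defined operators with $A\dashv B$, with a (possibly unbounded) intertwining operator $T$, and assume that $T^{-1}$ is bounded and everywhere defined on $\mathcal K$. Then $\rho(A)\setminus\sigma_p(B)\subseteq\rho(B)$.
   Context: A closed, densely defined operator $T:\mathcal H\to\mathcal K$ is called an intertwining operator for $A$ and $B$ if: (io$_0$) $D(A)\subset D(T)$ and $D(TA)=D(A)$; (io$_1$) $T$ maps $D(A)$ into $D(B)$; (io$_2$) $BT\xi=TA\xi$ for all $\xi\in D(A)$. We write $A\dashv B$ if there exists an intertwining operator $T$ for $A$ and $B$ which is injective with densely defined inverse $T^{-1}$. $\rho$ denotes the resolvent set, $\sigma_p$ the point spectrum. *)

theory Defs
  imports "HOL-Analysis.Analysis"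
begin

text \<open>HOL-Analysis only provides real inner product spaces.
A complex Hilbert space is a real Hilbert space (with real inner product Re of the
complex one) together with a complex scalar multiplication extending the real one,
for which multiplication by the imaginary unit is isometric (equivalently, the
complex inner product is recovered by polarization).\<close>

class complex_hilbert = real_inner + complete_space +
  fixes scaleC :: "complex \<Rightarrow> 'a \<Rightarrow> 'a"
  assumes scaleC_add_right: "scaleC a (x + y) = scaleC a x + scaleC a y"
    and scaleC_add_left: "scaleC (a + b) x = scaleC a x + scaleC b x"
    and scaleC_scaleC: "scaleC a (scaleC b x) = scaleC (a * b) x"
    and scaleC_of_real: "scaleC (complex_of_real r) x = scaleR r x"
    and inner_scaleC_ii: "inner (scaleC \<i> x) (scaleC \<i> y) = inner x y"

text \<open>A (possibly unbounded) operator is given by its domain D and a function f,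
which is only relevant on D.\<close>

definition csubspace :: "'a::complex_hilbert set \<Rightarrow> bool" where
  "csubspace S \<longleftrightarrow> 0 \<in> S \<and> (\<forall>x\<in>S. \<forall>y\<in>S. x + y \<in> S) \<and> (\<forall>c. \<forall>x\<in>S. scaleC c x \<in> S)"

definition lin_op :: "'a::complex_hilbert set \<Rightarrow> ('a \<Rightarrow> 'b::complex_hilbert) \<Rightarrow> bool" where
  "lin_op D f \<longleftrightarrow> csubspace D \<and>
     (\<forall>x\<in>D. \<forall>y\<in>D. f (x + y) = f x + f y) \<and>
     (\<forall>c. \<forall>x\<in>D. f (scaleC c x) = scaleC c (f x))"

definition graph :: "'a set \<Rightarrow> ('a \<Rightarrow> 'b) \<Rightarrow> ('a \<times> 'b) set" where
  "graph D f = {(x, f x) | x. x \<in> D}"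

definition closed_op :: "'a::complex_hilbert set \<Rightarrow> ('a \<Rightarrow> 'b::complex_hilbert) \<Rightarrow> bool" where
  "closed_op D f \<longleftrightarrow> lin_op D f \<and> closed (graph D f)"

definition densely_defined :: "'a::complex_hilbert set \<Rightarrow> bool" where
  "densely_defined D \<longleftrightarrow> closure D = UNIV"

definition closed_dd :: "'a::complex_hilbert set \<Rightarrow> ('a \<Rightarrow> 'b::complex_hilbert) \<Rightarrow> bool" where
  "closed_dd D f \<longleftrightarrow> closed_op D f \<and> densely_defined D"

definition intertwining ::
  "'h::complex_hilbert set \<Rightarrow> ('h \<Rightarrow> 'k::complex_hilbert) \<Rightarrow>
   'h set \<Rightarrow> ('h \<Rightarrow> 'h) \<Rightarrow> 'k set \<Rightarrow> ('k \<Rightarrow> 'k) \<Rightarrow> bool" where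
  "intertwining DT T DA A DB B \<longleftrightarrow>
     closed_dd DT T \<and>
     DA \<subseteq> DT \<and> {x \<in> DA. A x \<in> DT} = DA \<and>
     (\<forall>x\<in>DA. T x \<in> DB) \<and>
     (\<forall>x\<in>DA. B (T x) = T (A x))"

definition resolvent_set :: "'a::complex_hilbert set \<Rightarrow> ('a \<Rightarrow> 'a) \<Rightarrow> complex set" where
  "resolvent_set D f = {z. bij_betw (\<lambda>x. f x - scaleC z x) D UNIV \<and>
      (\<exists>C. \<forall>y. norm (inv_into D (\<lambda>x. f x - scaleC z x) y) \<le> C * norm y)}"

definition point_spectrum :: "'a::complex_hilbert set \<Rightarrow> ('a \<Rightarrow> 'a) \<Rightarrow> complex set" where
  "point_spectrum D f = {z. \<exists>x\<in>D. x \<noteq> 0 \<and> f x = scaleC z x}"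

end

theory Submission
  imports Defs
begin

text \<open>For \<open>\<xi> \<in> D(A)\<close> the intertwining relation gives \<open>(B - z) T \<xi> = T (A - z) \<xi>\<close>. Since
\<open>A - z\<close> maps \<open>D(A)\<close> onto \<open>\<H>\<close> and \<open>T\<close> maps onto \<open>\<K>\<close>, the operator \<open>B - z\<close> maps \<open>D(B)\<close> onto \<open>\<K>\<close>;
it is injective because \<open>z\<close> is not an eigenvalue of \<open>B\<close>. Its inverse is everywhere defined
and, \<open>B\<close> being closed, has closed graph, so it is bounded by the closed graph theorem.\<close>

subclass (in complex_hilbert) banach ..

lemma scaleC_minus_one: "scaleC (-1) (x::'a::complex_hilbert) = - x"
  using scaleC_of_real[of "-1" x] by simp

lemma scaleC_minus_right: "scaleC a (- (x::'a::complex_hilbert)) = - scaleC a x"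
proof -
  have "scaleC a x + scaleC a (- x) = scaleC a 0"
    by (simp flip: scaleC_add_right)
  also have "\<dots> = 0"
    using scaleC_add_right[of a 0 0] by simp
  finally show ?thesis
    by (simp add: eq_neg_iff_add_eq_0 add.commute)
qed

lemma scaleC_diff_right: "scaleC a ((x::'a::complex_hilbert) - y) = scaleC a x - scaleC a y"
  using scaleC_add_right[of a x "-y"] by (simp add: scaleC_minus_right)

lemma scaleC_commute: "scaleC a (scaleC b (x::'a::complex_hilbert)) = scaleC b (scaleC a x)"
  by (simp add: scaleC_scaleC mult.commute)

lemma scaleC_scaleR: "scaleC a (r *\<^sub>R (x::'a::complex_hilbert)) = r *\<^sub>R scaleC a x"
  by (simp only: scaleC_of_real[symmetric] scaleC_commute)

lemma scaleC_Re_Im: "scaleC z (x::'a::complex_hilbert) = Re z *\<^sub>R x + Im z *\<^sub>R scaleC \<i> x"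
proof -
  have "z = complex_of_real (Re z) + complex_of_real (Im z) * \<i>"
    by (simp add: complex_eq_iff)
  then have "scaleC z x = scaleC (complex_of_real (Re z) + complex_of_real (Im z) * \<i>) x"
    by simp
  also have "\<dots> = Re z *\<^sub>R x + Im z *\<^sub>R scaleC \<i> x"
    by (simp only: scaleC_add_left flip: scaleC_scaleC) (simp only: scaleC_of_real)
  finally show ?thesis .
qed

lemma bounded_linear_scaleC: "bounded_linear (scaleC z :: 'a::complex_hilbert \<Rightarrow> 'a)"
proof -
  have "bounded_linear (scaleC \<i> :: 'a \<Rightarrow> 'a)"
    by (rule bounded_linear_intro[where K = 1])
      (simp_all add: scaleC_add_right scaleC_scaleR norm_eq_sqrt_inner inner_scaleC_ii)
  then have "bounded_linear (\<lambda>x::'a. Re z *\<^sub>R x + Im z *\<^sub>R scaleC \<i> x)"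
    by (intro bounded_linear_add bounded_linear_compose[OF bounded_linear_scaleR_right]
        bounded_linear_ident)
  moreover have "scaleC z = (\<lambda>x::'a. Re z *\<^sub>R x + Im z *\<^sub>R scaleC \<i> x)"
    using scaleC_Re_Im by blast
  ultimately show ?thesis
    by simp
qed

lemma csubspace_diff:
  assumes "csubspace D" "x \<in> D" "y \<in> D"
  shows "x - y \<in> D"
  using assms scaleC_minus_one[of y] unfolding csubspace_def
  by (metis diff_conv_add_uminus)

lemma lin_op_diff:
  assumes "lin_op D f" "x \<in> D" "y \<in> D"
  shows "f (x - y) = f x - f y"
  using assms scaleC_minus_one unfolding lin_op_def csubspace_def
  by (metis diff_conv_add_uminus)

lemma lin_op_shift:
  assumes "lin_op D f"
  shows "lin_op D (\<lambda>x. f x - scaleC z x)"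
  using assms unfolding lin_op_def
  by (simp add: scaleC_add_right scaleC_diff_right scaleC_commute csubspace_def)

lemma closed_op_shift:
  assumes "closed_op D f"
  shows "closed_op D (\<lambda>x. f x - scaleC z x)"
proof -
  have "graph D (\<lambda>x. f x - scaleC z x) = (\<lambda>p. (fst p, snd p + scaleC z (fst p))) -` graph D f"
    by (auto simp: graph_def eq_diff_eq)
  moreover have "closed ((\<lambda>p. (fst p, snd p + scaleC z (fst p))) -` graph D f)"
    using assms unfolding closed_op_def
    by (intro continuous_closed_vimage continuous_intros
        bounded_linear.continuous[OF bounded_linear_scaleC]) simp_all
  ultimately have "closed (graph D (\<lambda>x. f x - scaleC z x))"
    by simp
  with assms show ?thesis
    by (simp add: closed_op_def lin_op_shift)
qed

lemma inj_on_shift_if_not_eigenvalue: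
  assumes "lin_op D f" "z \<notin> point_spectrum D f"
  shows "inj_on (\<lambda>x. f x - scaleC z x) D"
proof (rule inj_onI)
  fix x y assume xy: "x \<in> D" "y \<in> D" "f x - scaleC z x = f y - scaleC z y"
  have "x - y \<in> D"
    using assms(1) xy csubspace_diff by (auto simp: lin_op_def)
  moreover have "f (x - y) = scaleC z (x - y)"
  proof -
    have "f x - f y = scaleC z x - scaleC z y"
      using xy(3) by (simp add: algebra_simps)
    then show ?thesis
      using lin_op_diff[OF assms(1) xy(1,2)] by (simp add: scaleC_diff_right)
  qed
  ultimately show "x = y"
    using assms(2) by (auto simp: point_spectrum_def)
qed

lemma linear_inv_into_lin_op:
  assumes "lin_op D g" "bij_betw g D UNIV"
  shows "linear (inv_into D g)"
proof -
  have V: "inv_into D g y \<in> D" "g (inv_into D g y) = y" for y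
    using assms(2) by (auto simp: bij_betw_def intro: inv_into_into f_inv_into_f)
  have unique: "inv_into D g y = x" if "x \<in> D" "g x = y" for x y
    using assms(2) that by (auto simp: bij_betw_def intro: inv_into_f_eq)
  show ?thesis
  proof (rule linearI)
    fix a b
    show "inv_into D g (a + b) = inv_into D g a + inv_into D g b"
      using assms(1) V by (intro unique) (auto simp: lin_op_def csubspace_def)
  next
    fix r :: real and a
    show "inv_into D g (r *\<^sub>R a) = r *\<^sub>R inv_into D g a"
      using assms(1) V by (intro unique) (auto simp: lin_op_def csubspace_def simp flip: scaleC_of_real)
  qed
qed

lemma closed_graph_inv_into:
  fixes g :: "'a::topological_space \<Rightarrow> 'b::topological_space"
  assumes "closed (graph D g)" "bij_betw g D UNIV"
  shows "closed (graph UNIV (inv_into D g))"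
proof -
  have "graph UNIV (inv_into D g) = prod.swap -` graph D g"
  proof -
    have "inv_into D g y \<in> D" "g (inv_into D g y) = y" for y
      using assms(2) by (auto simp: bij_betw_def intro: inv_into_into f_inv_into_f)
    moreover have "inv_into D g (g x) = x" if "x \<in> D" for x
      using assms(2) that by (simp add: bij_betw_def)
    ultimately show ?thesis
      by (force simp: graph_def)
  qed
  then show ?thesis
    using assms(1) by (simp add: closed_vimage continuous_on_swap)
qed

subsection \<open>The closed graph theorem\<close>

lemma Baire_ball_in_closure_sublevel:
  fixes f :: "'a::banach \<Rightarrow> 'b::real_normed_vector"
  obtains c x0 r where "r > 0" "ball x0 r \<subseteq> closure {x. norm (f x) \<le> c}"
proof -
  define S where "S n = closure {x. norm (f x) \<le> real n}" for n :: nat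
  have "\<Union>(range S) = UNIV"
  proof -
    have "x \<in> S (nat \<lceil>norm (f x)\<rceil>)" for x
      unfolding S_def by (rule closure_subset[THEN subsetD]) (simp add: real_nat_ceiling_ge)
    then show ?thesis by blast
  qed
  then have "\<exists>n. interior (S n) \<noteq> {}"
    using Baire_category_alt[of euclidean "range S"]
    by (auto simp: completely_metrizable_space_euclidean S_def)
  then obtain n x0 where "x0 \<in> interior (S n)"
    by blast
  then obtain r where "r > 0" "ball x0 r \<subseteq> S n"
    by (meson open_contains_ball_eq open_interior interior_subset subset_trans)
  then show ?thesis
    using that S_def by blast
qed

lemma linear_ball_0_in_closure_sublevel:
  fixes f :: "'a::real_normed_vector \<Rightarrow> 'b::real_normed_vector"
  assumes "linear f" "ball x0 r \<subseteq> closure {x. norm (f x) \<le> c}"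
  shows "ball 0 r \<subseteq> closure {x. norm (f x) \<le> 2 * c}"
proof
  fix x :: 'a assume "x \<in> ball 0 r"
  define S where "S = {x. norm (f x) \<le> c}"
  have diff_S: "(\<lambda>p. fst p - snd p) ` (S \<times> S) \<subseteq> closure {x. norm (f x) \<le> 2 * c}"
  proof (intro subsetI closure_subset[THEN subsetD])
    fix p assume "p \<in> (\<lambda>p. fst p - snd p) ` (S \<times> S)"
    then obtain a b where "p = a - b" "norm (f a) \<le> c" "norm (f b) \<le> c"
      by (auto simp: S_def)
    then show "p \<in> {x. norm (f x) \<le> 2 * c}"
      using norm_triangle_ineq4[of "f a" "f b"] by (simp add: linear_diff[OF assms(1)])
  qed
  have diff_closure: "(\<lambda>p. fst p - snd p) ` closure (S \<times> S) \<subseteq> closure {x. norm (f x) \<le> 2 * c}"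
    by (rule image_closure_subset[OF _ closed_closure diff_S]) (intro continuous_intros)
  have "x0 + x \<in> ball x0 r" "x0 \<in> ball x0 r"
    using \<open>x \<in> ball 0 r\<close> by (auto simp: dist_norm intro: order.strict_trans1[OF norm_ge_zero])
  then have "(x0 + x, x0) \<in> closure (S \<times> S)"
    using assms(2) by (auto simp: closure_Times S_def)
  then show "x \<in> closure {x. norm (f x) \<le> 2 * c}"
    using diff_closure by force
qed

lemma linear_in_closure_sublevel_scaled:
  fixes f :: "'a::real_normed_vector \<Rightarrow> 'b::real_normed_vector"
  assumes "linear f" "r > 0" "ball 0 r \<subseteq> closure {x. norm (f x) \<le> c}"
  shows "x \<in> closure {u. norm (f u) \<le> 2 * c / r * norm x}"
proof (cases "x = 0")
  case True
  then show ?thesis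
    using linear_0[OF assms(1)] closure_subset by fastforce
next
  case False
  define t where "t = r / (2 * norm x)"
  have t: "t > 0" "t * norm x < r"
    using False assms(2) by (simp_all add: t_def)
  then have "t *\<^sub>R x \<in> closure {x. norm (f x) \<le> c}"
    using assms(3) by (auto simp: dist_norm)
  then have "x \<in> (\<lambda>u. (1 / t) *\<^sub>R u) ` closure {x. norm (f x) \<le> c}"
    using t by (intro image_eqI[of _ _ "t *\<^sub>R x"]) simp_all
  also have "\<dots> = closure ((\<lambda>u. (1 / t) *\<^sub>R u) ` {x. norm (f x) \<le> c})"
    by (rule closure_scaleR)
  also have "\<dots> \<subseteq> closure {u. norm (f u) \<le> 2 * c / r * norm x}"
  proof (intro closure_mono subsetI)
    fix v assume "v \<in> (\<lambda>u. (1 / t) *\<^sub>R u) ` {x. norm (f x) \<le> c}"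
    then obtain u where "v = (1 / t) *\<^sub>R u" "norm (f u) \<le> c"
      by blast
    then show "v \<in> {u. norm (f u) \<le> 2 * c / r * norm x}"
      using t False assms(2) by (simp add: linear_scale[OF assms(1)] t_def field_simps)
  qed
  finally show ?thesis .
qed

lemma linear_approximately_bounded:
  fixes f :: "'a::banach \<Rightarrow> 'b::real_normed_vector"
  assumes "linear f"
  obtains M where "M \<ge> 0" "\<And>x. x \<in> closure {u. norm (f u) \<le> M * norm x}"
proof -
  obtain c x0 r where r: "r > 0" "ball x0 r \<subseteq> closure {x. norm (f x) \<le> c}"
    by (rule Baire_ball_in_closure_sublevel)
  then have "{x. norm (f x) \<le> c} \<noteq> {}"
    using centre_in_ball[of x0 r] by force
  then have "c \<ge> 0"
    using norm_ge_zero order_trans by blast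
  then show ?thesis
    using r linear_in_closure_sublevel_scaled[OF assms r(1) linear_ball_0_in_closure_sublevel[OF assms r(2)]]
    by (intro that[of "2 * (2 * c) / r"]) auto
qed

lemma approximately_bounded_series:
  fixes f :: "'a::real_normed_vector \<Rightarrow> 'b::real_normed_vector"
  assumes M: "M \<ge> 0" and approx: "\<And>y. y \<in> closure {u. norm (f u) \<le> M * norm y}"
    and "x \<noteq> 0"
  obtains u where "\<And>N. norm (x - (\<Sum>k<N. u k)) \<le> norm x * (1/2) ^ N"
    and "\<And>k. norm (f (u k)) \<le> M * norm x * (1/2) ^ k"
proof -
  have "\<exists>v. norm (y - v) < norm x * (1/2) ^ Suc k \<and> norm (f v) \<le> M * norm y" for y k
    using closure_approachableD[OF approx[of y], of "norm x * (1/2) ^ Suc k"] \<open>x \<noteq> 0\<close>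
    by (auto simp: dist_norm)
  then obtain U where U: "\<And>y k. norm (y - U y k) < norm x * (1/2) ^ Suc k"
    "\<And>y k. norm (f (U y k)) \<le> M * norm y"
    by metis
  \<comment> \<open>\<open>e k\<close> is the remainder left after \<open>k\<close> approximation steps\<close>
  define e where "e = rec_nat x (\<lambda>k ek. ek - U ek k)"
  have e_0: "e 0 = x" and e_Suc: "e (Suc k) = e k - U (e k) k" for k
    by (simp_all add: e_def)
  have e_bound: "norm (e k) \<le> norm x * (1/2) ^ k" for k
  proof (cases k)
    case (Suc j)
    then show ?thesis
      using U(1)[of "e j" j] by (simp add: e_Suc)
  qed (simp add: e_0)
  have "x - (\<Sum>k<N. U (e k) k) = e N" for N
    by (induction N) (simp_all add: e_0 e_Suc)
  moreover have "norm (f (U (e k) k)) \<le> M * norm x * (1/2) ^ k" for k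
    using U(2)[of "e k" k] mult_left_mono[OF e_bound[of k] M] by (simp add: mult.assoc)
  ultimately show ?thesis
    using e_bound that[of "\<lambda>k. U (e k) k"] by simp
qed

lemma closed_graph_tendsto_eq:
  fixes f :: "'a::topological_space \<Rightarrow> 'b::topological_space"
  assumes "closed (graph UNIV f)" "X \<longlonglongrightarrow> x" "(\<lambda>n. f (X n)) \<longlonglongrightarrow> y"
  shows "f x = y"
proof -
  have "(x, y) \<in> graph UNIV f"
    by (rule closed_sequentially[OF assms(1) _ tendsto_Pair[OF assms(2,3)]]) (simp add: graph_def)
  then show ?thesis
    by (simp add: graph_def)
qed

theorem closed_graph_theorem:
  fixes f :: "'a::banach \<Rightarrow> 'b::banach"
  assumes lin: "linear f" and closed: "closed (graph UNIV f)"
  shows "bounded_linear f"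
proof -
  obtain M where M: "M \<ge> 0" "\<And>x. x \<in> closure {u. norm (f u) \<le> M * norm x}"
    using linear_approximately_bounded[OF lin] by blast
  have bound: "norm (f x) \<le> norm x * (2 * M)" for x
  proof (cases "x = 0")
    case True
    then show ?thesis
      using linear_0[OF lin] by simp
  next
    case False
    then obtain u where u_sum: "\<And>N. norm (x - (\<Sum>k<N. u k)) \<le> norm x * (1/2) ^ N"
      and u_bound: "\<And>k. norm (f (u k)) \<le> M * norm x * (1/2) ^ k"
      using approximately_bounded_series[OF M] by blast
    have geometric: "(\<lambda>k. M * norm x * (1/2::real) ^ k) sums (M * norm x * 2)"
      using sums_mult[OF geometric_sums[of "1/2::real"], of "M * norm x"] by simp
    have remainder: "(\<lambda>N. x - (\<Sum>k<N. u k)) \<longlonglongrightarrow> 0"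
      using u_sum by (intro Lim_null_comparison[OF _ tendsto_mult_right_zero[OF LIMSEQ_power_zero]])
        (auto simp: eventually_sequentially)
    have "(\<lambda>N. \<Sum>k<N. u k) \<longlonglongrightarrow> x"
      using tendsto_diff[OF tendsto_const[of x] remainder] by simp
    moreover have summable: "summable (\<lambda>k. norm (f (u k)))"
      using u_bound by (intro summable_comparison_test[OF _ sums_summable[OF geometric]]) auto
    then have "(\<lambda>N. f (\<Sum>k<N. u k)) \<longlonglongrightarrow> (\<Sum>k. f (u k))"
      using summable_LIMSEQ[OF summable_norm_cancel] by (simp add: linear_sum[OF lin])
    ultimately have "f x = (\<Sum>k. f (u k))"
      by (rule closed_graph_tendsto_eq[OF closed])
    also have "norm \<dots> \<le> (\<Sum>k. norm (f (u k)))"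
      by (rule summable_norm[OF summable])
    also have "\<dots> \<le> (\<Sum>k. M * norm x * (1/2) ^ k)"
      by (rule suminf_le[OF u_bound summable sums_summable[OF geometric]])
    also have "\<dots> = norm x * (2 * M)"
      using sums_unique[OF geometric] by (simp add: mult_ac)
    finally show ?thesis .
  qed
  show ?thesis
    by (rule bounded_linear_intro[OF linear_add[OF lin] linear_scale[OF lin] bound])
qed

lemma closed_op_bij_betw_in_resolvent_set:
  assumes "closed_op D f" "bij_betw (\<lambda>x. f x - scaleC z x) D UNIV"
  shows "z \<in> resolvent_set D f"
proof -
  let ?g = "\<lambda>x. f x - scaleC z x"
  have "closed_op D ?g"
    using assms(1) by (rule closed_op_shift)
  then have "bounded_linear (inv_into D ?g)"
    using assms(2) unfolding closed_op_def
    by (intro closed_graph_theorem linear_inv_into_lin_op closed_graph_inv_into) auto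
  then obtain C where "\<And>y. norm (inv_into D ?g y) \<le> norm y * C"
    using bounded_linear.bounded by blast
  then show ?thesis
    using assms(2) unfolding resolvent_set_def by (auto simp: mult.commute)
qed

lemma intertwining_shift:
  assumes "intertwining DT T DA A DB B" "x \<in> DA"
  shows "B (T x) - scaleC z (T x) = T (A x - scaleC z x)"
proof -
  have T: "lin_op DT T" "x \<in> DT" "A x \<in> DT"
    using assms unfolding intertwining_def closed_dd_def closed_op_def by blast+
  then have "T (A x - scaleC z x) = T (A x) - scaleC z (T x)"
    by (metis lin_op_diff lin_op_def csubspace_def)
  then show ?thesis
    using assms unfolding intertwining_def by simp
qed

lemma intertwining_shift_surj:
  assumes T: "intertwining DT T DA A DB B" "T ` DT = UNIV"
    and A: "(\<lambda>x. A x - scaleC z x) ` DA = UNIV"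
  shows "(\<lambda>x. B x - scaleC z x) ` DB = UNIV"
proof -
  have "UNIV = T ` DT"
    using T(2) by simp
  also have "\<dots> \<subseteq> T ` (\<lambda>x. A x - scaleC z x) ` DA"
    unfolding A by (rule image_mono) simp
  also have "\<dots> = (\<lambda>x. B x - scaleC z x) ` T ` DA"
    using intertwining_shift[OF T(1)] by (force simp: image_comp)
  also have "\<dots> \<subseteq> (\<lambda>x. B x - scaleC z x) ` DB"
    using T(1) unfolding intertwining_def by blast
  finally show ?thesis
    by (rule top.extremum_uniqueI)
qed

theorem corollary2p10:
  fixes DA :: "'h::complex_hilbert set" and A :: "'h \<Rightarrow> 'h"
    and DB :: "'k::complex_hilbert set" and B :: "'k \<Rightarrow> 'k"
    and DT :: "'h set" and T :: "'h \<Rightarrow> 'k"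
  assumes A: "closed_dd DA A"
    and B: "closed_dd DB B"
    and T_int: "intertwining DT T DA A DB B"
    and T_inj: "inj_on T DT"
    and Tinv_dense: "densely_defined (T ` DT)"
    and Tinv_everywhere: "T ` DT = UNIV"
    and Tinv_bounded: "\<exists>C. \<forall>y. norm (inv_into DT T y) \<le> C * norm y"
  shows "resolvent_set DA A - point_spectrum DB B \<subseteq> resolvent_set DB B"
proof
  fix z assume z: "z \<in> resolvent_set DA A - point_spectrum DB B"
  have B_closed: "closed_op DB B"
    using B by (simp add: closed_dd_def)
  have "(\<lambda>x. A x - scaleC z x) ` DA = UNIV"
    using z by (simp add: resolvent_set_def bij_betw_def)
  then have "(\<lambda>x. B x - scaleC z x) ` DB = UNIV"
    by (rule intertwining_shift_surj[OF T_int Tinv_everywhere])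
  moreover have "inj_on (\<lambda>x. B x - scaleC z x) DB"
    using B_closed z by (intro inj_on_shift_if_not_eigenvalue) (auto simp: closed_op_def)
  ultimately show "z \<in> resolvent_set DB B"
    using B_closed by (intro closed_op_bij_betw_in_resolvent_set) (auto simp: bij_betw_def)
qed

end
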